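(* Let $\mathcal{G}_1$ and $\mathcal{G}_2$ be reaction networks in $\mathbb{R}^d$. Then $\mathcal{G}_2\sqsubseteq\mathcal{G}_1$ if and only if (i) $\mathcal{SC}_{\mathcal{G}_2}\subset\mathcal{SC}_{\mathcal{G}_1}$, and (ii) for every $\mathbf{s}\in\mathcal{SC}_{\mathcal{G}_1}$, $\mathrm{RelInt}(V^{\mathcal{G}_2}(\mathbf{s}))\subseteq\mathrm{RelInt}(V^{\mathcal{G}_1}(\mathbf{s}))$, where $V^{\mathcal{G}}(\mathbf{s})=\{\mathbf{0}\}$ if $\mathbf{s}\notin\mathcal{SC}_{\mathcal{G}}$.
   Context: A reaction network (E-graph) $\mathcal{G}=(\mathcal{V},\mathcal{E})$ is a finite directed graph whose nodes are distinct elements of a finite set $Y\subset\mathbb{R}^d_{\ge 0}$, with $\mathcal{V}\neq\emptyset$, every node incident to at least one edge, and no edge from a node to itself. For an edge $e$, $\mathbf{s}(e)$ is its source node, $\mathbf{t}(e)$ its target node, and $\mathbf{v}(e)=\mathbf{t}(e)-\mathbf{s}(e)$. Given positive rate constants $\mathcal{K}=(k_e)_{e\in\mathcal{E}}$, $\mathcal{G}$ generates $\mathbf{f}_{\mathcal{G}(\mathcal{K})}(\mathbf{x})=\sum_{e\in\mathcal{E}}k_e\mathbf{x}^{\mathbf{s}(e)}\mathbf{v}(e)$, with $\mathbf{x}^{\mathbf{y}}=\prod_i x_i^{y_i}$, $0^0=1$. We write $\mathcal{G}_2\sqsubseteq\mathcal{G}_1$ if for every choice of positive rate constants $\mathcal{K}_2$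 for $\mathcal{G}_2$ there exist positive rate constants $\mathcal{K}_1$ for $\mathcal{G}_1$ with $\mathbf{f}_{\mathcal{G}_1(\mathcal{K}_1)}(\mathbf{x})=\mathbf{f}_{\mathcal{G}_2(\mathcal{K}_2)}(\mathbf{x})$ for all $\mathbf{x}$. $\mathcal{SC}_{\mathcal{G}}=\{\mathbf{s}(e):e\in\mathcal{E}\}$ is the set of source complexes. For $\mathbf{s}\in\mathcal{SC}_{\mathcal{G}}$, $V^{\mathcal{G}}(\mathbf{s})$ is the cone (set of all nonnegative linear combinations) generated by $\{\mathbf{v}(e):e\in\mathcal{E},\mathbf{s}(e)=\mathbf{s}\}$. $\mathrm{RelInt}(K)$ denotes the interior of a cone $K$ relative to its linear span. *)

theory Defs
  imports "HOL-Analysis.Analysis"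
begin

type_synonym 'd cplx = "real ^ 'd"
type_synonym 'd edge = "'d cplx \<times> 'd cplx"   (* (source, target) *)

definition nonneg_orthant :: "'d::finite cplx set" where
  "nonneg_orthant = {x. \<forall>i. x $ i \<ge> 0}"

definition reaction_network :: "'d::finite cplx set \<Rightarrow> 'd edge set \<Rightarrow> bool" where
  "reaction_network V E \<longleftrightarrow>
     finite V \<and> V \<noteq> {} \<and> V \<subseteq> nonneg_orthant \<and> E \<subseteq> V \<times> V \<and>
     (\<forall>e\<in>E. fst e \<noteq> snd e) \<and>
     (\<forall>y\<in>V. \<exists>e\<in>E. fst e = y \<or> snd e = y)"

(* x^y = prod_i x_i^{y_i} with the convention 0^0 = 1 *)
definition monom :: "'d::finite cplx \<Rightarrow> 'd cplx \<Rightarrow> real" where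
  "monom x y = (\<Prod>i\<in>UNIV. if y $ i = 0 then 1 else (x $ i) powr (y $ i))"

definition rn_field :: "'d::finite edge set \<Rightarrow> ('d edge \<Rightarrow> real) \<Rightarrow> 'd cplx \<Rightarrow> 'd cplx" where
  "rn_field E K x = (\<Sum>e\<in>E. (K e * monom x (fst e)) *\<^sub>R (snd e - fst e))"

definition pos_rates :: "'d::finite edge set \<Rightarrow> ('d edge \<Rightarrow> real) \<Rightarrow> bool" where
  "pos_rates E K \<longleftrightarrow> (\<forall>e\<in>E. K e > 0)"

definition realizable_in :: "'d::finite edge set \<Rightarrow> 'd edge set \<Rightarrow> bool" where
  "realizable_in E2 E1 \<longleftrightarrow>
     (\<forall>K2. pos_rates E2 K2 \<longrightarrow>
        (\<exists>K1. pos_rates E1 K1 \<and> (\<forall>x\<in>nonneg_orthant. rn_field E1 K1 x = rn_field E2 K2 x)))"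

definition source_complexes :: "'d::finite edge set \<Rightarrow> 'd cplx set" where
  "source_complexes E = fst ` E"

definition nonneg_cone :: "'d::finite cplx set \<Rightarrow> 'd cplx set" where
  "nonneg_cone S = {\<Sum>v\<in>S. c v *\<^sub>R v | c. \<forall>v\<in>S. c v \<ge> 0}"

definition reaction_cone :: "'d::finite edge set \<Rightarrow> 'd cplx \<Rightarrow> 'd cplx set" where
  "reaction_cone E s =
     (if s \<in> source_complexes E then nonneg_cone {snd e - fst e | e. e \<in> E \<and> fst e = s}
      else {0})"

end

theory Submission
  imports Defs
begin

text \<open>
  Grouping reactions by source complex writes the generated field as
  \<open>f(x) = (\<Sum>s. x\<^sup>s w\<^sub>s(K))\<close>, where the net flux \<open>w\<^sub>s(K)\<close> is the sum of
  \<open>k\<^sub>e v(e)\<close> over the reactions with source \<open>s\<close>. Distinct monomials are linearly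
  independent on the positive orthant (along \<open>x = exp (r a)\<close> for a direction \<open>a\<close> separating
  the exponents they become distinct exponentials in \<open>r\<close>), so two networks generate the
  same field iff their net fluxes agree at every source complex. As the positive rate
  constants vary, \<open>w\<^sub>s(K)\<close> sweeps out exactly the relative interior of \<open>V(s)\<close>, the
  Minkowski sum of the rays spanned by the reaction vectors at \<open>s\<close>; and the rates at
  different sources can be chosen independently. Hence (ii) is precisely what is needed to
  match net fluxes, and (i) holds because at a source of \<open>G\<^sub>2\<close> that is not a source
  of \<open>G\<^sub>1\<close> every net flux of \<open>G\<^sub>2\<close> would have to vanish, which forces a self-loop.
\<close>

lemma lin_comb_set_eq_sum_rays:
  fixes T :: "'a::real_vector set"
  assumes "finite T"
  shows "{\<Sum>v\<in>T. c v *\<^sub>R v | c. \<forall>v\<in>T. c v \<in> I} = (\<Sum>v\<in>T. (\<lambda>a. a *\<^sub>R v) ` I)"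
  unfolding set_sum_alt[OF assms]
proof safe
  fix u assume "\<forall>v\<in>T. u v \<in> (\<lambda>a. a *\<^sub>R v) ` I"
  then have "\<forall>v\<in>T. \<exists>a. a \<in> I \<and> u v = a *\<^sub>R v" by blast
  then obtain c where c: "\<forall>v\<in>T. c v \<in> I \<and> u v = c v *\<^sub>R v"
    by (rule bchoice[THEN exE])
  then show "\<exists>c. sum u T = (\<Sum>v\<in>T. c v *\<^sub>R v) \<and> (\<forall>v\<in>T. c v \<in> I)"
    by (intro exI[of _ c]) (auto intro: sum.cong)
qed auto

lemma rel_interior_nonneg_cone:
  fixes T :: "'d::finite cplx set"
  assumes "finite T"
  shows "rel_interior (nonneg_cone T) = {\<Sum>v\<in>T. c v *\<^sub>R v | c. \<forall>v\<in>T. c v > 0}"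
proof -
  have ray: "convex ((\<lambda>a. a *\<^sub>R v) ` {0::real..})" for v :: "'d cplx"
    by (rule convex_linear_image) auto
  have "rel_interior ((\<lambda>a. a *\<^sub>R v) ` {0..}) = (\<lambda>a. a *\<^sub>R v) ` {0<..}" for v :: "'d cplx"
    using rel_interior_convex_linear_image[OF linear_scaleR_left, of "{0..}" v] by simp
  moreover have "nonneg_cone T = (\<Sum>v\<in>T. (\<lambda>a. a *\<^sub>R v) ` {0..})"
    unfolding nonneg_cone_def lin_comb_set_eq_sum_rays[OF assms, symmetric] by simp
  ultimately show ?thesis
    using rel_interior_sum_gen[of T, OF ray] lin_comb_set_eq_sum_rays[OF assms, of "{0<..}"]
    by simp
qed

lemma pos_lin_comb_image:
  fixes f :: "'a \<Rightarrow> 'b::real_vector"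
  assumes "inj_on f A"
  shows "{\<Sum>y\<in>f ` A. c y *\<^sub>R y | c. \<forall>y\<in>f ` A. c y > 0}
       = {\<Sum>x\<in>A. k x *\<^sub>R f x | k. \<forall>x\<in>A. k x > 0}"
proof safe
  fix c :: "'b \<Rightarrow> real" assume "\<forall>y\<in>f ` A. 0 < c y"
  then show "\<exists>k. (\<Sum>y\<in>f ` A. c y *\<^sub>R y) = (\<Sum>x\<in>A. k x *\<^sub>R f x) \<and> (\<forall>x\<in>A. 0 < k x)"
    using assms by (intro exI[of _ "c \<circ> f"]) (simp add: sum.reindex)
next
  fix k :: "'a \<Rightarrow> real" assume "\<forall>x\<in>A. 0 < k x"
  then show "\<exists>c. (\<Sum>x\<in>A. k x *\<^sub>R f x) = (\<Sum>y\<in>f ` A. c y *\<^sub>R y) \<and> (\<forall>y\<in>f ` A. 0 < c y)"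
    using assms
    by (intro exI[of _ "k \<circ> the_inv_into A f"]) (simp add: sum.reindex the_inv_into_f_f)
qed

lemma tendsto_exp_mult_neg_at_top: "(a::real) < 0 \<Longrightarrow> ((\<lambda>r. exp (a * r)) \<longlongrightarrow> 0) at_top"
  by (intro filterlim_compose[OF exp_at_bot] filterlim_tendsto_neg_mult_at_bot[OF tendsto_const]
      filterlim_ident)

lemma exp_sum_eq_0_imp_coeffs_eq_0:
  fixes c :: "real \<Rightarrow> 'a::real_normed_vector"
  assumes "finite L" and "\<And>r. (\<Sum>l\<in>L. exp (l * r) *\<^sub>R c l) = 0"
  shows "\<forall>l\<in>L. c l = 0"
  using assms
proof (induction L rule: finite_linorder_max_induct)
  case empty
  then show ?case by simp
next
  case (insert b A)
  have "b \<notin> A" using insert.hyps by auto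
  have scaled: "c b + (\<Sum>l\<in>A. exp ((l - b) * r) *\<^sub>R c l) = 0" for r
  proof -
    have "c b + (\<Sum>l\<in>A. exp ((l - b) * r) *\<^sub>R c l)
        = exp (- b * r) *\<^sub>R (\<Sum>l\<in>insert b A. exp (l * r) *\<^sub>R c l)"
      using \<open>b \<notin> A\<close> insert.hyps(1)
      by (simp add: scaleR_sum_right algebra_simps flip: exp_add)
    then show ?thesis using insert.prems by simp
  qed
  \<comment> \<open>\<open>b\<close> is the largest exponent, so all other terms die out as \<open>r \<rightarrow> \<infinity>\<close>.\<close>
  have "((\<lambda>r. c b + (\<Sum>l\<in>A. exp ((l - b) * r) *\<^sub>R c l)) \<longlongrightarrow> c b + 0) at_top"
  proof (intro tendsto_add tendsto_const tendsto_null_sum)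
    fix l assume "l \<in> A"
    then have "((\<lambda>r. exp ((l - b) * r)) \<longlongrightarrow> 0) at_top"
      using insert.hyps by (intro tendsto_exp_mult_neg_at_top) auto
    then show "((\<lambda>r. exp ((l - b) * r) *\<^sub>R c l) \<longlongrightarrow> 0) at_top"
      using tendsto_scaleR[OF _ tendsto_const, of _ 0 at_top "c l"] by simp
  qed
  then have "c b = 0" by (simp add: scaled tendsto_const_iff)
  moreover have "\<forall>l\<in>A. c l = 0"
    using insert.prems \<open>b \<notin> A\<close> insert.hyps(1) \<open>c b = 0\<close> by (intro insert.IH) simp
  ultimately show ?case by simp
qed

lemma finite_imp_inj_on_inner:
  fixes S :: "'a::euclidean_space set"
  assumes "finite S"
  shows "\<exists>a. inj_on (\<lambda>s. a \<bullet> s) S"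
proof -
  define B where "B = (\<Union>(s, t)\<in>{(s, t)\<in>S \<times> S. s \<noteq> t}. {a. (s - t) \<bullet> a = 0})"
  have "finite {(s, t)\<in>S \<times> S. s \<noteq> t}"
    using assms by (auto intro: finite_subset[of _ "S \<times> S"])
  then have "negligible B"
    unfolding B_def by (intro negligible_Union) (auto intro!: negligible_hyperplane)
  then obtain a where "a \<notin> B"
    using non_negligible_UNIV by (metis UNIV_eq_I)
  have "inj_on (\<lambda>s. a \<bullet> s) S"
  proof (rule inj_onI)
    fix s t assume st: "s \<in> S" "t \<in> S" "a \<bullet> s = a \<bullet> t"
    then have "(s - t) \<bullet> a = 0" by (simp add: inner_commute[of _ a] inner_diff_right)
    then show "s = t" using \<open>a \<notin> B\<close> st(1,2) unfolding B_def by blast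
  qed
  then show ?thesis ..
qed

lemma monom_exp_vec: "monom (\<chi> i. exp (a $ i * r)) s = exp ((a \<bullet> s) * r)"
proof -
  have "monom (\<chi> i. exp (a $ i * r)) s = (\<Prod>i\<in>UNIV. exp (a $ i * s $ i * r))"
    unfolding monom_def by (intro prod.cong refl) (auto simp: powr_def)
  also have "\<dots> = exp ((a \<bullet> s) * r)"
    by (simp add: exp_sum inner_vec_def sum_distrib_right)
  finally show ?thesis .
qed

lemma monom_sum_eq_0_imp_coeffs_eq_0:
  fixes C :: "'d::finite cplx \<Rightarrow> 'a::real_normed_vector"
  assumes "finite S" and "\<forall>x\<in>nonneg_orthant. (\<Sum>s\<in>S. monom x s *\<^sub>R C s) = 0"
  shows "\<forall>s\<in>S. C s = 0"
proof -
  obtain a where inj: "inj_on (\<lambda>s. a \<bullet> s) S"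
    using finite_imp_inj_on_inner[OF assms(1)] by blast
  define c where "c = C \<circ> the_inv_into S (\<lambda>s. a \<bullet> s)"
  have "(\<Sum>l\<in>(\<lambda>s. a \<bullet> s) ` S. exp (l * r) *\<^sub>R c l) = 0" for r
  proof -
    have "(\<Sum>l\<in>(\<lambda>s. a \<bullet> s) ` S. exp (l * r) *\<^sub>R c l)
        = (\<Sum>s\<in>S. monom (\<chi> i. exp (a $ i * r)) s *\<^sub>R C s)"
      using inj by (simp add: sum.reindex monom_exp_vec c_def the_inv_into_f_f)
    also have "\<dots> = 0"
      using assms(2) by (auto simp: nonneg_orthant_def less_imp_le)
    finally show ?thesis .
  qed
  then show ?thesis
    using exp_sum_eq_0_imp_coeffs_eq_0[of "(\<lambda>s. a \<bullet> s) ` S" c] assms(1) inj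
    by (auto simp: c_def the_inv_into_f_f)
qed

definition net_flux :: "'d::finite edge set \<Rightarrow> ('d edge \<Rightarrow> real) \<Rightarrow> 'd cplx \<Rightarrow> 'd cplx" where
  "net_flux E K s = (\<Sum>e\<in>{e\<in>E. fst e = s}. K e *\<^sub>R (snd e - fst e))"

lemma net_flux_cong:
  "(\<And>e. e \<in> E \<Longrightarrow> fst e = s \<Longrightarrow> K e = K' e) \<Longrightarrow> net_flux E K s = net_flux E K' s"
  unfolding net_flux_def by (intro sum.cong) auto

lemma net_flux_not_source:
  assumes "s \<notin> source_complexes E"
  shows "net_flux E K s = 0"
proof -
  have no_edges: "{e\<in>E. fst e = s} = {}" using assms by (force simp: source_complexes_def)
  show ?thesis unfolding net_flux_def no_edges by simp
qed

lemma rn_field_eq_sum_net_flux: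
  assumes "finite E" "finite T" "source_complexes E \<subseteq> T"
  shows "rn_field E K x = (\<Sum>s\<in>T. monom x s *\<^sub>R net_flux E K s)"
proof -
  have "rn_field E K x
      = (\<Sum>s\<in>T. \<Sum>e\<in>{e\<in>E. fst e = s}. (K e * monom x (fst e)) *\<^sub>R (snd e - fst e))"
    unfolding rn_field_def using assms
    by (intro sum.group[symmetric]) (auto simp: source_complexes_def)
  also have "\<dots> = (\<Sum>s\<in>T. monom x s *\<^sub>R net_flux E K s)"
    unfolding net_flux_def scaleR_sum_right by (intro sum.cong refl) (auto simp: mult.commute)
  finally show ?thesis .
qed

lemma rn_field_eq_iff_net_flux_eq:
  fixes E1 E2 :: "'d::finite edge set"
  assumes "finite E1" "finite E2"
  shows "(\<forall>x\<in>nonneg_orthant. rn_field E1 K1 x = rn_field E2 K2 x) \<longleftrightarrow>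
    (\<forall>s\<in>source_complexes E1 \<union> source_complexes E2. net_flux E1 K1 s = net_flux E2 K2 s)"
proof -
  define T where "T = source_complexes E1 \<union> source_complexes E2"
  have "finite T" unfolding T_def source_complexes_def using assms by simp
  have diff: "rn_field E1 K1 x - rn_field E2 K2 x
      = (\<Sum>s\<in>T. monom x s *\<^sub>R (net_flux E1 K1 s - net_flux E2 K2 s))" for x
    using rn_field_eq_sum_net_flux[OF assms(1) \<open>finite T\<close>, of K1 x]
      rn_field_eq_sum_net_flux[OF assms(2) \<open>finite T\<close>, of K2 x]
    by (simp add: T_def scaleR_diff_right sum_subtractf)
  show ?thesis
  proof
    assume "\<forall>x\<in>nonneg_orthant. rn_field E1 K1 x = rn_field E2 K2 x"
    with diff have "\<forall>x\<in>nonneg_orthant.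
        (\<Sum>s\<in>T. monom x s *\<^sub>R (net_flux E1 K1 s - net_flux E2 K2 s)) = 0"
      by (metis right_minus_eq)
    from monom_sum_eq_0_imp_coeffs_eq_0[OF \<open>finite T\<close> this]
    show "\<forall>s\<in>source_complexes E1 \<union> source_complexes E2. net_flux E1 K1 s = net_flux E2 K2 s"
      by (simp add: T_def)
  next
    assume "\<forall>s\<in>source_complexes E1 \<union> source_complexes E2. net_flux E1 K1 s = net_flux E2 K2 s"
    with diff show "\<forall>x\<in>nonneg_orthant. rn_field E1 K1 x = rn_field E2 K2 x"
      by (simp add: T_def)
  qed
qed

lemma net_flux_eq_0_imp_self_loop:
  assumes "finite E" "e0 \<in> E" "\<And>K. pos_rates E K \<Longrightarrow> net_flux E K (fst e0) = 0"
  shows "snd e0 = fst e0"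
proof -
  define R where "R K = (\<Sum>e\<in>{e\<in>E. fst e = fst e0} - {e0}. K e *\<^sub>R (snd e - fst e))" for K
  have split: "net_flux E K (fst e0) = K e0 *\<^sub>R (snd e0 - fst e0) + R K" for K
    unfolding net_flux_def R_def using assms(1,2) by (subst sum.remove) auto
  have "R (\<lambda>e. if e = e0 then 2 else 1) = R (\<lambda>_. 1)"
    unfolding R_def by (intro sum.cong) auto
  then have "net_flux E (\<lambda>e. if e = e0 then 2 else 1) (fst e0)
      = net_flux E (\<lambda>_. 1) (fst e0) + (snd e0 - fst e0)"
    by (simp add: split scaleR_2 algebra_simps)
  moreover have "pos_rates E (\<lambda>e. if e = e0 then 2 else 1)" "pos_rates E (\<lambda>_. 1)"
    by (simp_all add: pos_rates_def)
  ultimately show ?thesis using assms(3) by simp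
qed

lemma reaction_cone_eq_nonneg_cone:
  "reaction_cone E s = nonneg_cone ((\<lambda>e. snd e - fst e) ` {e\<in>E. fst e = s})"
proof (cases "s \<in> source_complexes E")
  case True
  have "{snd e - fst e | e. e \<in> E \<and> fst e = s} = (\<lambda>e. snd e - fst e) ` {e\<in>E. fst e = s}"
    by blast
  with True show ?thesis by (simp only: reaction_cone_def if_True)
next
  case False
  then have no_edges: "{e\<in>E. fst e = s} = {}" by (force simp: source_complexes_def)
  show ?thesis
    unfolding reaction_cone_def no_edges using False by (simp add: nonneg_cone_def)
qed

lemma rel_interior_reaction_cone:
  assumes "finite E"
  shows "rel_interior (reaction_cone E s) = {net_flux E K s | K. pos_rates E K}"
proof -
  let ?Es = "{e\<in>E. fst e = s}" and ?V = "(\<lambda>e. snd e - fst e) ` {e\<in>E. fst e = s}"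
  have "rel_interior (reaction_cone E s) = rel_interior (nonneg_cone ?V)"
    by (simp only: reaction_cone_eq_nonneg_cone)
  also have "\<dots> = {\<Sum>v\<in>?V. c v *\<^sub>R v | c. \<forall>v\<in>?V. c v > 0}"
    using assms by (intro rel_interior_nonneg_cone) simp
  also have "\<dots> = {\<Sum>e\<in>?Es. k e *\<^sub>R (snd e - fst e) | k. \<forall>e\<in>?Es. k e > 0}"
    by (rule pos_lin_comb_image) (auto simp: inj_on_def prod_eq_iff)
  also have "\<dots> = {net_flux E K s | K. pos_rates E K}"
  proof safe
    fix k :: "'a edge \<Rightarrow> real" assume k: "\<forall>e\<in>?Es. k e > 0"
    define K where "K e = (if fst e = s then k e else 1)" for e
    have "pos_rates E K"
      using k by (auto simp: pos_rates_def K_def)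
    moreover have "net_flux E K s = (\<Sum>e\<in>?Es. k e *\<^sub>R (snd e - fst e))"
      unfolding net_flux_def by (intro sum.cong) (auto simp: K_def)
    ultimately show "\<exists>K. (\<Sum>e\<in>?Es. k e *\<^sub>R (snd e - fst e)) = net_flux E K s \<and> pos_rates E K"
      by (intro exI[of _ K]) simp
  next
    fix K assume "pos_rates E K"
    then show "\<exists>k. net_flux E K s = (\<Sum>e\<in>?Es. k e *\<^sub>R (snd e - fst e)) \<and> (\<forall>e\<in>?Es. k e > 0)"
      by (intro exI[of _ K]) (simp add: net_flux_def pos_rates_def)
  qed
  finally show ?thesis .
qed

lemma pos_rates_choice:
  assumes "\<And>s. s \<in> source_complexes E \<Longrightarrow> \<exists>K. pos_rates E K \<and> net_flux E K s = w s"
  shows "\<exists>K. pos_rates E K \<and> (\<forall>s\<in>source_complexes E. net_flux E K s = w s)"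
proof -
  have "\<forall>s\<in>source_complexes E. \<exists>K. pos_rates E K \<and> net_flux E K s = w s"
    using assms by blast
  then obtain Ks
    where Ks: "\<forall>s\<in>source_complexes E. pos_rates E (Ks s) \<and> net_flux E (Ks s) s = w s"
    by (rule bchoice[THEN exE])
  have "pos_rates E (\<lambda>e. Ks (fst e) e)"
    using Ks by (auto simp: pos_rates_def source_complexes_def)
  moreover have "net_flux E (\<lambda>e. Ks (fst e) e) s = w s" if "s \<in> source_complexes E" for s
  proof -
    have "net_flux E (\<lambda>e. Ks (fst e) e) s = net_flux E (Ks s) s"
      by (rule net_flux_cong) simp
    then show ?thesis using Ks that by simp
  qed
  ultimately show ?thesis by blast
qed

lemma reaction_network_finite_edges: "reaction_network V E \<Longrightarrow> finite E"
  unfolding reaction_network_def by (auto intro: finite_subset[of E "V \<times> V"])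

lemma realizable_in_iff_net_flux:
  assumes "finite E1" "finite E2"
  shows "realizable_in E2 E1 \<longleftrightarrow> (\<forall>K2. pos_rates E2 K2 \<longrightarrow> (\<exists>K1. pos_rates E1 K1 \<and>
      (\<forall>s\<in>source_complexes E1 \<union> source_complexes E2. net_flux E1 K1 s = net_flux E2 K2 s)))"
  unfolding realizable_in_def rn_field_eq_iff_net_flux_eq[OF assms] ..

lemma realizable_in_imp_source_complexes_subset:
  assumes "finite E1" "finite E2" "\<forall>e\<in>E2. fst e \<noteq> snd e" "realizable_in E2 E1"
  shows "source_complexes E2 \<subseteq> source_complexes E1"
proof
  fix s assume s2: "s \<in> source_complexes E2"
  then obtain e0 where e0: "e0 \<in> E2" "fst e0 = s" by (auto simp: source_complexes_def)
  show "s \<in> source_complexes E1"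
  proof (rule ccontr)
    assume s1: "s \<notin> source_complexes E1"
    have "net_flux E2 K2 s = 0" if K2: "pos_rates E2 K2" for K2
    proof -
      obtain K1 where "\<forall>s\<in>source_complexes E1 \<union> source_complexes E2.
          net_flux E1 K1 s = net_flux E2 K2 s"
        using assms(4) K2 unfolding realizable_in_iff_net_flux[OF assms(1,2)] by blast
      with s2 have "net_flux E2 K2 s = net_flux E1 K1 s" by simp
      also have "\<dots> = 0" using s1 by (rule net_flux_not_source)
      finally show ?thesis .
    qed
    then have "snd e0 = fst e0"
      using net_flux_eq_0_imp_self_loop[OF assms(2) e0(1)] e0(2) by blast
    with assms(3) e0(1) show False by auto
  qed
qed

lemma realizable_in_imp_rel_interior_subset:
  assumes "finite E1" "finite E2" "realizable_in E2 E1" "s \<in> source_complexes E1"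
  shows "rel_interior (reaction_cone E2 s) \<subseteq> rel_interior (reaction_cone E1 s)"
proof
  fix w assume "w \<in> rel_interior (reaction_cone E2 s)"
  then obtain K2 where K2: "pos_rates E2 K2" "net_flux E2 K2 s = w"
    unfolding rel_interior_reaction_cone[OF assms(2)] by blast
  then obtain K1 where "pos_rates E1 K1" "\<forall>s\<in>source_complexes E1 \<union> source_complexes E2.
      net_flux E1 K1 s = net_flux E2 K2 s"
    using assms(3) unfolding realizable_in_iff_net_flux[OF assms(1,2)] by blast
  with assms(4) K2(2) have "pos_rates E1 K1" "net_flux E1 K1 s = w" by simp_all
  then show "w \<in> rel_interior (reaction_cone E1 s)"
    unfolding rel_interior_reaction_cone[OF assms(1)] by blast
qed

lemma rel_interior_subset_imp_realizable_in:
  assumes "finite E1" "finite E2" "source_complexes E2 \<subseteq> source_complexes E1"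
    and "\<And>s. s \<in> source_complexes E1 \<Longrightarrow>
      rel_interior (reaction_cone E2 s) \<subseteq> rel_interior (reaction_cone E1 s)"
  shows "realizable_in E2 E1"
  unfolding realizable_in_iff_net_flux[OF assms(1,2)]
proof (intro allI impI)
  fix K2 assume K2: "pos_rates E2 K2"
  have "\<exists>K1. pos_rates E1 K1 \<and> net_flux E1 K1 s = net_flux E2 K2 s"
    if s1: "s \<in> source_complexes E1" for s
  proof -
    have "net_flux E2 K2 s \<in> rel_interior (reaction_cone E2 s)"
      unfolding rel_interior_reaction_cone[OF assms(2)] using K2 by blast
    with assms(4)[OF s1] have "net_flux E2 K2 s \<in> rel_interior (reaction_cone E1 s)" by blast
    then show ?thesis unfolding rel_interior_reaction_cone[OF assms(1)] by auto
  qed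
  then obtain K1 where "pos_rates E1 K1"
      "\<forall>s\<in>source_complexes E1. net_flux E1 K1 s = net_flux E2 K2 s"
    using pos_rates_choice by blast
  moreover have "source_complexes E1 \<union> source_complexes E2 = source_complexes E1"
    using assms(3) by blast
  ultimately show "\<exists>K1. pos_rates E1 K1 \<and>
      (\<forall>s\<in>source_complexes E1 \<union> source_complexes E2. net_flux E1 K1 s = net_flux E2 K2 s)"
    by auto
qed

theorem theorem2:
  fixes V1 V2 :: "('d::finite) cplx set" and E1 E2 :: "'d edge set"
  assumes "reaction_network V1 E1" and "reaction_network V2 E2"
  shows "realizable_in E2 E1 \<longleftrightarrow>
     (source_complexes E2 \<subseteq> source_complexes E1 \<and>
      (\<forall>s\<in>source_complexes E1.
         rel_interior (reaction_cone E2 s) \<subseteq> rel_interior (reaction_cone E1 s)))"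
proof -
  have fin: "finite E1" "finite E2"
    using assms by (simp_all add: reaction_network_finite_edges)
  have "\<forall>e\<in>E2. fst e \<noteq> snd e"
    using assms(2) by (simp add: reaction_network_def)
  then show ?thesis
    using realizable_in_imp_source_complexes_subset[OF fin]
      realizable_in_imp_rel_interior_subset[OF fin]
      rel_interior_subset_imp_realizable_in[OF fin]
    by blast
qed

end
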